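(* Let $A$ be a Hopf algebra and $R$ a unital algebra. Then a linear map $\cdot:A\otimes R\to R$ makes $R$ a partial $A$-module algebra in the Hopf-algebraic sense (conditions (H1)--(H3) below) if and only if there is a linear map $\mathfrak e:A\to R=M(R)$ such that $(R,\cdot,\mathfrak e)$ is a partial $A$-module algebra in the multiplier sense (conditions (i)--(iv) below); in that case $\mathfrak e(a)=a\cdot 1_R$. (H1) $1_A\cdot x=x$; (H2) $a\cdot(xy)=(a_{(1)}\cdot x)(a_{(2)}\cdot y)$; (H3) $a\cdot(b\cdot x)=(a_{(1)}\cdot 1_R)(a_{(2)}b\cdot x)$, for all $a,b\in A$, $x,y\in R$.
   Context: A partial $A$-module algebra in the multiplier sense is a triple $(R,\cdot,\mathfrak e)$, with $\cdot:A\otimes R\to R$ and $\mathfrak e:A\to M(R)$ linear, such that for all $a,b\in A$, $x,y\in R$: (i) $a\cdot(x(b\cdot y))=(a_{(1)}\cdot x)(a_{(2)}b\cdot y)$; (ii) $\mathfrak e(a)(b\cdot x)=a_{(1)}\cdot(S(a_{(2)})b\cdot x)$ and $\mathfrak e(A)R\subseteq A\cdot R$ (the linear span of the $a\cdot x$); (iii) given $a_1,\dots,a_n\in A$ and $x_1,\dots,x_m\in R$ there exists $b\in A$ with $a_ib=a_i=ba_i$ and $a_i\cdot x_j=a_i\cdot(b\cdot x_j)$ for all $i,j$; (iv) $A\cdot x=0$ implies $x=0$. Here $S$ is the antipode of $A$ and Sweedler notation is used. *)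

theory Defs
  imports Complex_Main
begin

text \<open>Tensors in Sweedler notation: a coproduct is represented by a function
Delta giving, for each a, a finite list of pairs (a1_i, a2_i) with
Delta(a) = sum_i a1_i (x) a2_i.  Equalities of tensors are expressed by testing
against all bilinear (resp. trilinear) scalar forms, which separate points of
tensor products over a field.\<close>

definition linmap :: "('k::field \<Rightarrow> 'a::ab_group_add \<Rightarrow> 'a) \<Rightarrow> ('k \<Rightarrow> 'b::ab_group_add \<Rightarrow> 'b) \<Rightarrow> ('a \<Rightarrow> 'b) \<Rightarrow> bool" where
  "linmap sA sB f \<longleftrightarrow> (\<forall>x y. f (x + y) = f x + f y) \<and> (\<forall>c x. f (sA c x) = sB c (f x))"

definition kalg :: "('k::field \<Rightarrow> 'a::ring_1 \<Rightarrow> 'a) \<Rightarrow> bool" where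
  "kalg sc \<longleftrightarrow> vector_space sc \<and>
     (\<forall>c x y. sc c (x * y) = sc c x * y) \<and> (\<forall>c x y. sc c (x * y) = x * sc c y)"

definition bilinf :: "('k::field \<Rightarrow> 'a::ab_group_add \<Rightarrow> 'a) \<Rightarrow> ('a \<Rightarrow> 'a \<Rightarrow> 'k) \<Rightarrow> bool" where
  "bilinf sA \<beta> \<longleftrightarrow> (\<forall>y. linmap sA (*) (\<lambda>x. \<beta> x y)) \<and> (\<forall>x. linmap sA (*) (\<beta> x))"

definition trilinf :: "('k::field \<Rightarrow> 'a::ab_group_add \<Rightarrow> 'a) \<Rightarrow> ('a \<Rightarrow> 'a \<Rightarrow> 'a \<Rightarrow> 'k) \<Rightarrow> bool" where
  "trilinf sA \<gamma> \<longleftrightarrow> (\<forall>y z. linmap sA (*) (\<lambda>x. \<gamma> x y z)) \<and>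
     (\<forall>x z. linmap sA (*) (\<lambda>y. \<gamma> x y z)) \<and> (\<forall>x y. linmap sA (*) (\<gamma> x y))"

definition sw :: "('a \<Rightarrow> ('a \<times> 'a) list) \<Rightarrow> ('a \<Rightarrow> 'a \<Rightarrow> 'v::monoid_add) \<Rightarrow> 'a \<Rightarrow> 'v" where
  "sw \<Delta> f a = sum_list (map (\<lambda>(x, y). f x y) (\<Delta> a))"

definition hopf_algebra ::
  "('k::field \<Rightarrow> 'a::ring_1 \<Rightarrow> 'a) \<Rightarrow> ('a \<Rightarrow> ('a \<times> 'a) list) \<Rightarrow> ('a \<Rightarrow> 'k) \<Rightarrow> ('a \<Rightarrow> 'a) \<Rightarrow> bool" where
  "hopf_algebra sA \<Delta> \<epsilon> S \<longleftrightarrow>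
     kalg sA \<and>
     \<comment> \<open>Delta is linear\<close>
     (\<forall>\<beta>. bilinf sA \<beta> \<longrightarrow>
        (\<forall>a b. sw \<Delta> \<beta> (a + b) = sw \<Delta> \<beta> a + sw \<Delta> \<beta> b) \<and>
        (\<forall>c a. sw \<Delta> \<beta> (sA c a) = c * sw \<Delta> \<beta> a)) \<and>
     \<comment> \<open>Delta is a unital algebra map\<close>
     (\<forall>\<beta>. bilinf sA \<beta> \<longrightarrow>
        sw \<Delta> \<beta> 1 = \<beta> 1 1 \<and>
        (\<forall>a b. sw \<Delta> \<beta> (a * b) = sw \<Delta> (\<lambda>x y. sw \<Delta> (\<lambda>u v. \<beta> (x * u) (y * v)) b) a)) \<and>
     \<comment> \<open>coassociativity\<close>
     (\<forall>\<gamma>. trilinf sA \<gamma> \<longrightarrow>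
        (\<forall>a. sw \<Delta> (\<lambda>x y. sw \<Delta> (\<lambda>x1 x2. \<gamma> x1 x2 y) x) a =
             sw \<Delta> (\<lambda>x y. sw \<Delta> (\<lambda>y1 y2. \<gamma> x y1 y2) y) a)) \<and>
     \<comment> \<open>counit: linear, unital, multiplicative, counit property\<close>
     linmap sA (*) \<epsilon> \<and> \<epsilon> 1 = 1 \<and> (\<forall>a b. \<epsilon> (a * b) = \<epsilon> a * \<epsilon> b) \<and>
     (\<forall>a. sw \<Delta> (\<lambda>x y. sA (\<epsilon> x) y) a = a) \<and>
     (\<forall>a. sw \<Delta> (\<lambda>x y. sA (\<epsilon> y) x) a = a) \<and>
     \<comment> \<open>antipode\<close>
     linmap sA sA S \<and>
     (\<forall>a. sw \<Delta> (\<lambda>x y. S x * y) a = sA (\<epsilon> a) 1) \<and>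
     (\<forall>a. sw \<Delta> (\<lambda>x y. x * S y) a = sA (\<epsilon> a) 1)"

definition bilin_act :: "('k::field \<Rightarrow> 'a::ring_1 \<Rightarrow> 'a) \<Rightarrow> ('k \<Rightarrow> 'r::ring_1 \<Rightarrow> 'r) \<Rightarrow> ('a \<Rightarrow> 'r \<Rightarrow> 'r) \<Rightarrow> bool" where
  "bilin_act sA sR act \<longleftrightarrow> (\<forall>x. linmap sA sR (\<lambda>a. act a x)) \<and> (\<forall>a. linmap sR sR (act a))"

definition partial_hopf_mod_alg :: "('a \<Rightarrow> ('a \<times> 'a) list) \<Rightarrow> ('a::ring_1 \<Rightarrow> 'r::ring_1 \<Rightarrow> 'r) \<Rightarrow> bool" where
  "partial_hopf_mod_alg \<Delta> act \<longleftrightarrow>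
     (\<forall>x. act 1 x = x) \<and>
     (\<forall>a x y. act a (x * y) = sw \<Delta> (\<lambda>p q. act p x * act q y) a) \<and>
     (\<forall>a b x. act a (act b x) = sw \<Delta> (\<lambda>p q. act p 1 * act (q * b) x) a)"

definition act_span :: "('a \<Rightarrow> 'r::ring_1 \<Rightarrow> 'r) \<Rightarrow> 'r set" where
  "act_span act = {r. \<exists>ps. r = sum_list (map (\<lambda>(a, x). act a x) ps)}"

definition partial_mult_mod_alg ::
  "('a \<Rightarrow> ('a \<times> 'a) list) \<Rightarrow> ('a \<Rightarrow> 'a) \<Rightarrow> ('a::ring_1 \<Rightarrow> 'r::ring_1 \<Rightarrow> 'r) \<Rightarrow> ('a \<Rightarrow> 'r) \<Rightarrow> bool" where
  "partial_mult_mod_alg \<Delta> S act e \<longleftrightarrow>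
     (\<forall>a b x y. act a (x * act b y) = sw \<Delta> (\<lambda>p q. act p x * act (q * b) y) a) \<and>
     (\<forall>a b x. e a * act b x = sw \<Delta> (\<lambda>p q. act p (act (S q * b) x)) a) \<and>
     (\<forall>a x. e a * x \<in> act_span act) \<and>
     (\<forall>as xs. \<exists>b. \<forall>a\<in>set as. a * b = a \<and> b * a = a \<and> (\<forall>x\<in>set xs. act a x = act a (act b x))) \<and>
     (\<forall>x. (\<forall>a. act a x = 0) \<longrightarrow> x = 0)"

end

theory Submission
  imports Defs
begin

text \<open>From (H1)--(H3), condition (i) is (H2) with (H3) substituted into its second factor,
regrouped by coassociativity; condition (ii) follows from (H3) by coassociativity,
the antipode axiom and the counit, and \<open>e a = a \<cdot> 1\<close> then also satisfies (iii) and (iv)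
with the witness \<open>b = 1\<close>. Conversely, condition (iii) applied to \<open>a\<close> and \<open>1\<close> forces
\<open>b = 1\<close>, so \<open>a \<cdot> (1 \<cdot> x) = a \<cdot> x\<close> for all \<open>a\<close> and (iv) yields (H1); (H2) and (H3) are the
instances \<open>b = 1\<close> and \<open>x = 1\<close> of (i). Finally (ii) with \<open>b = 1\<close>, \<open>x = 1\<close>, compared with the
same expression computed from (H3), gives \<open>e a = a \<cdot> 1\<close>.\<close>

lemma linear_functional_nonzero_exists:
  fixes sR :: "'k::field \<Rightarrow> 'r::ab_group_add \<Rightarrow> 'r"
  assumes "vector_space sR" and "v \<noteq> 0"
  shows "\<exists>f. linmap sR (*) f \<and> f v \<noteq> 0"
proof -
  have "vector_space ((*) :: 'k \<Rightarrow> 'k \<Rightarrow> 'k)"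
    by unfold_locales (auto simp: algebra_simps)
  then interpret vp: vector_space_pair sR "(*) :: 'k \<Rightarrow> 'k \<Rightarrow> 'k"
    using assms(1) by (simp add: vector_space_pair_def)
  have "vp.vs1.independent {v}"
    using assms(2) by simp
  then obtain f where "Vector_Spaces.linear sR (*) f" and "f v = (1::'k)"
    using vp.linear_independent_extend[of "{v}" "\<lambda>_. 1"] by blast
  then show ?thesis
    by (intro exI[of _ f]) (simp add: linmap_def Vector_Spaces.linear_iff)
qed

lemma additive_sw:
  assumes "additive g"
  shows "g (sw \<Delta> f a) = sw \<Delta> (\<lambda>p q. g (f p q)) a"
proof -
  interpret additive g by fact
  have "g (sum_list (map (\<lambda>(x, y). f x y) xs)) = sum_list (map (\<lambda>(x, y). g (f x y)) xs)" for xs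
    by (induction xs) (auto simp: zero add)
  then show ?thesis
    unfolding sw_def by simp
qed

text \<open>Coassociativity is only postulated for scalar trilinear forms; it extends to
vector-valued ones because linear functionals separate the points of a vector space.\<close>

lemma hopf_algebra_coassoc:
  fixes sA :: "'k::field \<Rightarrow> 'a::ring_1 \<Rightarrow> 'a"
    and sR :: "'k \<Rightarrow> 'r::ab_group_add \<Rightarrow> 'r"
    and \<gamma> :: "'a \<Rightarrow> 'a \<Rightarrow> 'a \<Rightarrow> 'r"
  assumes H: "hopf_algebra sA \<Delta> \<epsilon> S" and "vector_space sR"
    and "\<And>y z. linmap sA sR (\<lambda>x. \<gamma> x y z)"
    and "\<And>x z. linmap sA sR (\<lambda>y. \<gamma> x y z)"
    and "\<And>x y. linmap sA sR (\<gamma> x y)"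
  shows "sw \<Delta> (\<lambda>x y. sw \<Delta> (\<lambda>x1 x2. \<gamma> x1 x2 y) x) a =
         sw \<Delta> (\<lambda>x y. sw \<Delta> (\<lambda>y1 y2. \<gamma> x y1 y2) y) a"
    (is "?L = ?R")
proof (rule ccontr)
  assume "?L \<noteq> ?R"
  then obtain f where f: "linmap sR (*) f" "f (?L - ?R) \<noteq> 0"
    using linear_functional_nonzero_exists[OF \<open>vector_space sR\<close>, of "?L - ?R"] by auto
  have f_add: "additive f"
    using f(1) by (simp add: linmap_def additive_def)
  have "trilinf sA (\<lambda>x y z. f (\<gamma> x y z))"
    using assms(3-5) f(1) unfolding trilinf_def linmap_def by simp
  then have "f ?L = f ?R"
    using H by (simp add: hopf_algebra_def additive_sw[OF f_add])
  then show False
    using f(2) by (simp add: additive.diff[OF f_add])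
qed

lemma partial_mult_imp_partial_hopf:
  assumes act_add: "\<And>a. additive (act a)"
    and M: "partial_mult_mod_alg \<Delta> S act e"
  shows "partial_hopf_mod_alg \<Delta> act"
proof -
  have i: "\<And>a b x y. act a (x * act b y) = sw \<Delta> (\<lambda>p q. act p x * act (q * b) y) a"
   and iii: "\<And>as xs. \<exists>b. \<forall>a\<in>set as. a * b = a \<and> b * a = a \<and>
                          (\<forall>x\<in>set xs. act a x = act a (act b x))"
   and iv: "\<And>x. (\<forall>a. act a x = 0) \<Longrightarrow> x = 0"
    using M unfolding partial_mult_mod_alg_def by blast+
  have H1: "act 1 x = x" for x
  proof -
    have "act a (act 1 x - x) = 0" for a
    proof -
      obtain b where b: "\<forall>a'\<in>set [a, 1]. a' * b = a' \<and> b * a' = a' \<and>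
                          (\<forall>y\<in>set [x]. act a' y = act a' (act b y))"
        using iii by blast
      then have "b = 1" by auto
      with b have "act a x = act a (act 1 x)" by auto
      then show ?thesis
        by (simp add: additive.diff[OF act_add])
    qed
    then show ?thesis
      using iv by (metis eq_iff_diff_eq_0)
  qed
  have "act a (x * y) = sw \<Delta> (\<lambda>p q. act p x * act q y) a" for a x y
    using i[of a x 1 y] by (simp add: H1)
  moreover have "act a (act b x) = sw \<Delta> (\<lambda>p q. act p 1 * act (q * b) x) a" for a b x
    using i[of a 1 b x] by simp
  ultimately show ?thesis
    unfolding partial_hopf_mod_alg_def using H1 by blast
qed

context
  fixes sA :: "'k::field \<Rightarrow> 'a::ring_1 \<Rightarrow> 'a"
    and sR :: "'k \<Rightarrow> 'r::ring_1 \<Rightarrow> 'r"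
    and \<Delta> :: "'a \<Rightarrow> ('a \<times> 'a) list" and \<epsilon> :: "'a \<Rightarrow> 'k" and S :: "'a \<Rightarrow> 'a"
    and act :: "'a \<Rightarrow> 'r \<Rightarrow> 'r"
  assumes H: "hopf_algebra sA \<Delta> \<epsilon> S"
    and kR: "kalg sR"
    and bil: "bilin_act sA sR act"
begin

lemma vector_space_R: "vector_space sR"
  using kR unfolding kalg_def by blast

lemma scale_mult_A [simp]: "sA c x * y = sA c (x * y)" "x * sA c y = sA c (x * y)"
  using H unfolding hopf_algebra_def kalg_def by metis+

lemma scale_mult_R [simp]: "sR c x * y = sR c (x * y)" "x * sR c y = sR c (x * y)"
  using kR unfolding kalg_def by metis+

lemma scale_add_R: "sR c (x + y) = sR c x + sR c y"
  using vector_space_R by (simp add: vector_space_def)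

lemma act_linear [simp]:
  "act (p + q) x = act p x + act q x"
  "act (sA c p) x = sR c (act p x)"
  "act p (x + y) = act p x + act p y"
  "act p (sR c x) = sR c (act p x)"
  using bil unfolding bilin_act_def linmap_def by blast+

lemma antipode_linear [simp]: "S (p + q) = S p + S q" "S (sA c p) = sA c (S p)"
  using H unfolding hopf_algebra_def linmap_def by blast+

lemma act_additive: "additive (act a)"
  by (simp add: additive_def)

lemma partial_hopf_act_mult_act:
  assumes "partial_hopf_mod_alg \<Delta> act"
  shows "act a (x * act b y) = sw \<Delta> (\<lambda>p q. act p x * act (q * b) y) a"
proof -
  have H2: "\<And>a x y. act a (x * y) = sw \<Delta> (\<lambda>p q. act p x * act q y) a"
   and H3: "\<And>a b x. act a (act b x) = sw \<Delta> (\<lambda>p q. act p 1 * act (q * b) x) a"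
    using assms unfolding partial_hopf_mod_alg_def by blast+
  have "act a (x * act b y) = sw \<Delta> (\<lambda>p q. act p x * sw \<Delta> (\<lambda>u v. act u 1 * act (v * b) y) q) a"
    by (simp add: H2 H3)
  also have "\<dots> = sw \<Delta> (\<lambda>p q. sw \<Delta> (\<lambda>u v. act p x * (act u 1 * act (v * b) y)) q) a"
    by (simp add: additive_sw[of "\<lambda>z. act _ x * z"] additive_def distrib_left)
  also have "\<dots> = sw \<Delta> (\<lambda>p' q. sw \<Delta> (\<lambda>p u. act p x * (act u 1 * act (q * b) y)) p') a"
    by (rule hopf_algebra_coassoc[OF H vector_space_R, symmetric])
      (auto simp: linmap_def algebra_simps scale_add_R)
  also have "\<dots> = sw \<Delta> (\<lambda>p' q. sw \<Delta> (\<lambda>p u. act p x * act u 1) p' * act (q * b) y) a"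
    by (simp add: additive_sw[of "\<lambda>z. z * _"] additive_def distrib_right mult.assoc)
  also have "\<dots> = sw \<Delta> (\<lambda>p q. act p x * act (q * b) y) a"
    by (simp add: H2[symmetric])
  finally show ?thesis .
qed

lemma partial_hopf_antipode_act:
  assumes "partial_hopf_mod_alg \<Delta> act"
  shows "sw \<Delta> (\<lambda>p q. act p (act (S q * b) x)) a = act a 1 * act b x"
proof -
  have H3: "\<And>a b x. act a (act b x) = sw \<Delta> (\<lambda>p q. act p 1 * act (q * b) x) a"
    using assms unfolding partial_hopf_mod_alg_def by blast
  have antipode: "\<And>a. sw \<Delta> (\<lambda>x y. x * S y) a = sA (\<epsilon> a) 1"
   and counit: "\<And>a. sw \<Delta> (\<lambda>x y. sA (\<epsilon> y) x) a = a"
    using H unfolding hopf_algebra_def by blast+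
  have "sw \<Delta> (\<lambda>p q. act p (act (S q * b) x)) a
      = sw \<Delta> (\<lambda>p q. sw \<Delta> (\<lambda>u v. act u 1 * act (v * (S q * b)) x) p) a"
    by (simp add: H3)
  also have "\<dots> = sw \<Delta> (\<lambda>u p'. sw \<Delta> (\<lambda>v q. act u 1 * act (v * (S q * b)) x) p') a"
    by (rule hopf_algebra_coassoc[OF H vector_space_R])
      (auto simp: linmap_def algebra_simps scale_add_R)
  also have "\<dots> = sw \<Delta> (\<lambda>u p'. act u 1 * act (sw \<Delta> (\<lambda>v q. v * S q) p' * b) x) a"
    by (simp add: additive_sw[of "\<lambda>z. act _ 1 * act (z * b) x"] additive_def
        distrib_left distrib_right mult.assoc)
  also have "\<dots> = sw \<Delta> (\<lambda>u p'. sR (\<epsilon> p') (act u 1) * act b x) a"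
    by (simp add: antipode)
  also have "\<dots> = act (sw \<Delta> (\<lambda>u p'. sA (\<epsilon> p') u) a) 1 * act b x"
    by (simp add: additive_sw[of "\<lambda>z. act z 1 * act b x"] additive_def distrib_right)
  also have "\<dots> = act a 1 * act b x"
    by (simp add: counit)
  finally show ?thesis .
qed

lemma partial_hopf_imp_partial_mult:
  assumes P: "partial_hopf_mod_alg \<Delta> act"
  shows "linmap sA sR (\<lambda>a. act a 1) \<and> partial_mult_mod_alg \<Delta> S act (\<lambda>a. act a 1)"
proof -
  have H1: "\<And>x. act 1 x = x"
    using P unfolding partial_hopf_mod_alg_def by blast
  have "act a 1 * x \<in> act_span act" for a x
    unfolding act_span_def by (intro CollectI exI[of _ "[(1, act a 1 * x)]"]) (simp add: H1)
  moreover have "\<exists>b. \<forall>a\<in>set as. a * b = a \<and> b * a = a \<and> (\<forall>x\<in>set xs. act a x = act a (act b x))"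
    for as xs by (intro exI[of _ 1]) (simp add: H1)
  moreover have "(\<forall>a. act a x = 0) \<Longrightarrow> x = 0" for x
    using H1 by metis
  ultimately show ?thesis
    unfolding partial_mult_mod_alg_def
    using partial_hopf_act_mult_act[OF P] partial_hopf_antipode_act[OF P]
    by (auto simp: linmap_def)
qed

lemma partial_mult_eq_act_one:
  assumes M: "partial_mult_mod_alg \<Delta> S act e"
  shows "e a = act a 1"
proof -
  have P: "partial_hopf_mod_alg \<Delta> act"
    using partial_mult_imp_partial_hopf[OF act_additive M] .
  then have H1: "\<And>x. act 1 x = x"
    unfolding partial_hopf_mod_alg_def by blast
  have "e a * act 1 1 = sw \<Delta> (\<lambda>p q. act p (act (S q * 1) 1)) a"
    using M unfolding partial_mult_mod_alg_def by blast
  also have "\<dots> = act a 1 * act 1 1"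
    by (rule partial_hopf_antipode_act[OF P])
  finally show ?thesis
    by (simp add: H1)
qed

end

theorem mainTheorem9:
  fixes sA :: "'k::field \<Rightarrow> 'a::ring_1 \<Rightarrow> 'a"
    and sR :: "'k \<Rightarrow> 'r::ring_1 \<Rightarrow> 'r"
    and \<Delta> :: "'a \<Rightarrow> ('a \<times> 'a) list" and \<epsilon> :: "'a \<Rightarrow> 'k" and S :: "'a \<Rightarrow> 'a"
    and act :: "'a \<Rightarrow> 'r \<Rightarrow> 'r"
  assumes "hopf_algebra sA \<Delta> \<epsilon> S"
    and "kalg sR"
    and "bilin_act sA sR act"
  shows "(partial_hopf_mod_alg \<Delta> act \<longleftrightarrow>
           (\<exists>e. linmap sA sR e \<and> partial_mult_mod_alg \<Delta> S act e)) \<and>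
         (\<forall>e. linmap sA sR e \<and> partial_mult_mod_alg \<Delta> S act e \<longrightarrow> (\<forall>a. e a = act a 1))"
  using partial_hopf_imp_partial_mult[OF assms]
    partial_mult_imp_partial_hopf[where act = act, OF act_additive[OF assms]]
    partial_mult_eq_act_one[OF assms]
  by blast

end
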